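(* Let $U,V$ be nonempty sets, $f:U\times V\to\mathbb R$ bounded, $f^-=\sup_{u\in U}\inf_{v\in V}f(u,v)$, $f^+=\inf_{v\in V}\sup_{u\in U}f(u,v)$, and for $p\in[0,1]$ let $f^p=pf^-+(1-p)f^+$. Let $\alpha$ range over all maps $V\to U$ and $\beta$ over all maps $U\to V$. Then $$f^p=\sup_{(u,\alpha)}\inf_{(v,\beta)}\big[p\,f(u,\beta(u))+(1-p)f(\alpha(v),v)\big]=\inf_{(v,\beta)}\sup_{(u,\alpha)}\big[p\,f(u,\beta(u))+(1-p)f(\alpha(v),v)\big],$$ where the sup is over $(u,\alpha)\in U\times V^{\,\text{maps}}$ ($u\in U$, $\alpha:V\to U$) and the inf over $(v,\beta)$ with $v\in V$, $\beta:U\to V$. *)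

theory Defs
  imports Complex_Main
begin

definition lower_value :: "'u set \<Rightarrow> 'v set \<Rightarrow> ('u \<Rightarrow> 'v \<Rightarrow> real) \<Rightarrow> real" where
  "lower_value U V f = (SUP u\<in>U. INF v\<in>V. f u v)"

definition upper_value :: "'u set \<Rightarrow> 'v set \<Rightarrow> ('u \<Rightarrow> 'v \<Rightarrow> real) \<Rightarrow> real" where
  "upper_value U V f = (INF v\<in>V. SUP u\<in>U. f u v)"

definition p_value :: "real \<Rightarrow> 'u set \<Rightarrow> 'v set \<Rightarrow> ('u \<Rightarrow> 'v \<Rightarrow> real) \<Rightarrow> real" where
  "p_value p U V f = p * lower_value U V f + (1 - p) * upper_value U V f"

end

theory Submission
  imports Defs
begin

text \<open>For fixed \<open>(u, \<alpha>)\<close> the objective separates: \<open>\<beta>\<close> enters only through \<open>\<beta> u\<close>, which ranges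
over all of \<open>V\<close> independently of \<open>v\<close>, so the inner infimum is
\<open>p \<cdot> inf\<^sub>v f(u,v) + (1 - p) \<cdot> inf\<^sub>v f(\<alpha> v, v)\<close>. The outer supremum separates as well,
and \<open>sup\<^sub>\<alpha> inf\<^sub>v f(\<alpha> v, v) = f\<^sup>+\<close> because \<open>\<alpha>\<close> may choose, for every \<open>v\<close>, an almost
maximising \<open>u\<close>. The inf-sup formula is dual.\<close>

lemma bdd_image_if_abs_le:
  fixes h :: "'a \<Rightarrow> real"
  assumes "\<And>x. x \<in> X \<Longrightarrow> \<bar>h x\<bar> \<le> B"
  shows "bdd_above (h ` X)" and "bdd_below (h ` X)"
  using assms by (meson abs_le_D1 abs_le_D2 bdd_aboveI2 bdd_belowI2 minus_le_iff)+

lemma abs_cINF_le: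
  fixes h :: "'a \<Rightarrow> real"
  assumes "X \<noteq> {}" and bound: "\<And>x. x \<in> X \<Longrightarrow> \<bar>h x\<bar> \<le> B"
  shows "\<bar>INF x\<in>X. h x\<bar> \<le> B"
proof -
  obtain x where x: "x \<in> X" using assms(1) by blast
  have "(INF x\<in>X. h x) \<le> h x"
    using cINF_lower[OF bdd_image_if_abs_le(2)[OF bound] x] .
  moreover have "- B \<le> (INF x\<in>X. h x)"
    using assms by (intro cINF_greatest) (fastforce simp: abs_le_iff)+
  ultimately show ?thesis using bound[OF x] by linarith
qed

lemma abs_cSUP_le:
  fixes h :: "'a \<Rightarrow> real"
  assumes "X \<noteq> {}" and bound: "\<And>x. x \<in> X \<Longrightarrow> \<bar>h x\<bar> \<le> B"
  shows "\<bar>SUP x\<in>X. h x\<bar> \<le> B"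
proof -
  obtain x where x: "x \<in> X" using assms(1) by blast
  have "h x \<le> (SUP x\<in>X. h x)"
    using cSUP_upper[OF x bdd_image_if_abs_le(1)[OF bound]] .
  moreover have "(SUP x\<in>X. h x) \<le> B"
    using assms by (intro cSUP_least) (auto simp: abs_le_iff)
  ultimately show ?thesis using bound[OF x] by linarith
qed

lemma cSUP_Times_add:
  fixes a :: "'a \<Rightarrow> 'c::{conditionally_complete_linorder,ordered_ab_group_add}"
    and b :: "'b \<Rightarrow> 'c"
  assumes X: "X \<noteq> {}" and Y: "Y \<noteq> {}"
    and bdd_a: "bdd_above (a ` X)" and bdd_b: "bdd_above (b ` Y)"
  shows "(SUP z\<in>X \<times> Y. a (fst z) + b (snd z)) = (SUP x\<in>X. a x) + (SUP y\<in>Y. b y)"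
    (is "?S = _")
proof (rule antisym)
  show "?S \<le> (SUP x\<in>X. a x) + (SUP y\<in>Y. b y)"
    using X Y bdd_a bdd_b by (intro cSUP_least) (auto intro!: add_mono cSUP_upper)
  obtain Ma Mb where "\<forall>x\<in>X. a x \<le> Ma" and "\<forall>y\<in>Y. b y \<le> Mb"
    using bdd_a bdd_b by (auto simp: bdd_above_def)
  then have bdd: "bdd_above ((\<lambda>z. a (fst z) + b (snd z)) ` (X \<times> Y))"
    by (intro bdd_aboveI2[where M = "Ma + Mb"]) (auto intro: add_mono)
  have "a x + (SUP y\<in>Y. b y) \<le> ?S" if x: "x \<in> X" for x
  proof -
    have "a x + (SUP y\<in>Y. b y) = (SUP y\<in>Y. a x + b y)"
      using Sup_add_eq[OF bdd_b Y] by simp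
    also have "\<dots> \<le> ?S"
      using x by (intro cSUP_least[OF Y] cSUP_upper2[OF bdd]) auto
    finally show ?thesis .
  qed
  then have "(SUP x\<in>X. (SUP y\<in>Y. b y) + a x) \<le> ?S"
    by (intro cSUP_least[OF X]) (simp add: add.commute)
  then show "(SUP x\<in>X. a x) + (SUP y\<in>Y. b y) \<le> ?S"
    by (subst add.commute) (simp only: Sup_add_eq[OF bdd_a X, symmetric])
qed

lemma cINF_Times_add:
  fixes a :: "'a \<Rightarrow> 'c::{conditionally_complete_linorder,ordered_ab_group_add}"
    and b :: "'b \<Rightarrow> 'c"
  assumes X: "X \<noteq> {}" and Y: "Y \<noteq> {}"
    and bdd_a: "bdd_below (a ` X)" and bdd_b: "bdd_below (b ` Y)"
  shows "(INF z\<in>X \<times> Y. a (fst z) + b (snd z)) = (INF x\<in>X. a x) + (INF y\<in>Y. b y)"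
    (is "?I = _")
proof (rule antisym)
  show "(INF x\<in>X. a x) + (INF y\<in>Y. b y) \<le> ?I"
    using X Y bdd_a bdd_b by (intro cINF_greatest) (auto intro!: add_mono cINF_lower)
  obtain ma mb where "\<forall>x\<in>X. ma \<le> a x" and "\<forall>y\<in>Y. mb \<le> b y"
    using bdd_a bdd_b by (auto simp: bdd_below_def)
  then have bdd: "bdd_below ((\<lambda>z. a (fst z) + b (snd z)) ` (X \<times> Y))"
    by (intro bdd_belowI2[where m = "ma + mb"]) (auto intro: add_mono)
  have "?I \<le> a x + (INF y\<in>Y. b y)" if x: "x \<in> X" for x
  proof -
    have "?I \<le> (INF y\<in>Y. a x + b y)"
      using x by (intro cINF_greatest[OF Y] cINF_lower2[OF bdd]) auto
    also have "\<dots> = a x + (INF y\<in>Y. b y)"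
      using Inf_add_eq[OF bdd_b Y] by simp
    finally show ?thesis .
  qed
  then have "?I \<le> (INF x\<in>X. (INF y\<in>Y. b y) + a x)"
    by (intro cINF_greatest[OF X]) (simp add: add.commute)
  then show "?I \<le> (INF x\<in>X. a x) + (INF y\<in>Y. b y)"
    by (subst add.commute) (simp only: Inf_add_eq[OF bdd_a X, symmetric])
qed

lemma cSUP_mult_left:
  fixes g :: "'a \<Rightarrow> real"
  assumes "A \<noteq> {}" and "bdd_above (g ` A)" and "0 \<le> c"
  shows "(SUP x\<in>A. c * g x) = c * (SUP x\<in>A. g x)"
  using continuous_at_Sup_mono[of "\<lambda>x. c * x" "g ` A"] assms
  by (simp add: image_image mono_def mult_left_mono continuous_mult)

lemma cINF_mult_left:
  fixes g :: "'a \<Rightarrow> real"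
  assumes "A \<noteq> {}" and "bdd_below (g ` A)" and "0 \<le> c"
  shows "(INF x\<in>A. c * g x) = c * (INF x\<in>A. g x)"
  using continuous_at_Inf_mono[of "\<lambda>x. c * x" "g ` A"] assms
  by (simp add: image_image mono_def mult_left_mono continuous_mult)

lemma cSUP_Times_weighted:
  fixes a :: "'a \<Rightarrow> real" and b :: "'b \<Rightarrow> real"
  assumes "X \<noteq> {}" and "Y \<noteq> {}" and "bdd_above (a ` X)" and "bdd_above (b ` Y)"
    and "0 \<le> p" and "0 \<le> q"
  shows "(SUP z\<in>X \<times> Y. p * a (fst z) + q * b (snd z))
    = p * (SUP x\<in>X. a x) + q * (SUP y\<in>Y. b y)"
proof -
  have "bdd_above ((\<lambda>x. p * a x) ` X)" and "bdd_above ((\<lambda>y. q * b y) ` Y)"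
    using bdd_above_image_mono[of "(*) p" "a ` X"] bdd_above_image_mono[of "(*) q" "b ` Y"] assms
    by (simp_all add: mono_def mult_left_mono image_image)
  then show ?thesis
    using cSUP_Times_add[of X Y "\<lambda>x. p * a x" "\<lambda>y. q * b y"]
      cSUP_mult_left[of X a p] cSUP_mult_left[of Y b q] assms
    by simp
qed

lemma cINF_Times_weighted:
  fixes a :: "'a \<Rightarrow> real" and b :: "'b \<Rightarrow> real"
  assumes "X \<noteq> {}" and "Y \<noteq> {}" and "bdd_below (a ` X)" and "bdd_below (b ` Y)"
    and "0 \<le> p" and "0 \<le> q"
  shows "(INF z\<in>X \<times> Y. p * a (fst z) + q * b (snd z))
    = p * (INF x\<in>X. a x) + q * (INF y\<in>Y. b y)"
proof -
  have "bdd_below ((\<lambda>x. p * a x) ` X)" and "bdd_below ((\<lambda>y. q * b y) ` Y)"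
    using bdd_below_image_mono[of "(*) p" "a ` X"] bdd_below_image_mono[of "(*) q" "b ` Y"] assms
    by (simp_all add: mono_def mult_left_mono image_image)
  then show ?thesis
    using cINF_Times_add[of X Y "\<lambda>x. p * a x" "\<lambda>y. q * b y"]
      cINF_mult_left[of X a p] cINF_mult_left[of Y b q] assms
    by simp
qed

lemma maps_into_nonempty:
  assumes "U \<noteq> {}"
  shows "{\<alpha>. \<alpha> ` V \<subseteq> U} \<noteq> {}"
proof -
  obtain u where "u \<in> U" using assms by blast
  then have "(\<lambda>_. u) \<in> {\<alpha>. \<alpha> ` V \<subseteq> U}" by auto
  then show ?thesis by blast
qed

lemma image_eval_maps_into:
  assumes "u \<in> U"
  shows "(\<lambda>\<beta>. \<beta> u) ` {\<beta>. \<beta> ` U \<subseteq> V} = V"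
proof (intro equalityI subsetI)
  show "v \<in> V" if "v \<in> (\<lambda>\<beta>. \<beta> u) ` {\<beta>. \<beta> ` U \<subseteq> V}" for v
    using that assms by (auto simp: image_subset_iff)
  show "v \<in> (\<lambda>\<beta>. \<beta> u) ` {\<beta>. \<beta> ` U \<subseteq> V}" if "v \<in> V" for v
    using that by (intro image_eqI[where x = "\<lambda>_. v"]) auto
qed

lemma SUP_maps_INF_eq_INF_SUP:
  fixes f :: "'u \<Rightarrow> 'v \<Rightarrow> real"
  assumes U: "U \<noteq> {}" and V: "V \<noteq> {}"
    and bound: "\<And>u v. u \<in> U \<Longrightarrow> v \<in> V \<Longrightarrow> \<bar>f u v\<bar> \<le> B"
  shows "(SUP \<alpha>\<in>{\<alpha>. \<alpha> ` V \<subseteq> U}. INF v\<in>V. f (\<alpha> v) v) = (INF v\<in>V. SUP u\<in>U. f u v)"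
proof (rule antisym)
  have bdd_column: "bdd_above ((\<lambda>u. f u v) ` U)" if "v \<in> V" for v
    using bound that by (intro bdd_image_if_abs_le) auto
  have bdd_SUP: "bdd_below ((\<lambda>v. SUP u\<in>U. f u v) ` V)"
    using U bound by (intro bdd_image_if_abs_le abs_cSUP_le) auto
  have bdd_INF: "bdd_above ((\<lambda>\<alpha>. INF v\<in>V. f (\<alpha> v) v) ` {\<alpha>. \<alpha> ` V \<subseteq> U})"
    using V bound by (intro bdd_image_if_abs_le abs_cINF_le) auto
  show "(SUP \<alpha>\<in>{\<alpha>. \<alpha> ` V \<subseteq> U}. INF v\<in>V. f (\<alpha> v) v) \<le> (INF v\<in>V. SUP u\<in>U. f u v)"
  proof (rule cSUP_least[OF maps_into_nonempty[OF U]])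
    fix \<alpha> assume \<alpha>: "\<alpha> \<in> {\<alpha>. \<alpha> ` V \<subseteq> U}"
    have "f (\<alpha> v) v \<le> (SUP u\<in>U. f u v)" if "v \<in> V" for v
      using \<alpha> that by (auto intro!: cSUP_upper bdd_column)
    moreover have "bdd_below ((\<lambda>v. f (\<alpha> v) v) ` V)"
      using \<alpha> bound by (intro bdd_image_if_abs_le) auto
    ultimately show "(INF v\<in>V. f (\<alpha> v) v) \<le> (INF v\<in>V. SUP u\<in>U. f u v)"
      by (intro cINF_mono[OF V]) auto
  qed
  show "(INF v\<in>V. SUP u\<in>U. f u v) \<le> (SUP \<alpha>\<in>{\<alpha>. \<alpha> ` V \<subseteq> U}. INF v\<in>V. f (\<alpha> v) v)"
  proof (rule dense_le)
    fix c assume c: "c < (INF v\<in>V. SUP u\<in>U. f u v)"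
    have "\<exists>u\<in>U. c < f u v" if v: "v \<in> V" for v
    proof -
      have "c < (SUP u\<in>U. f u v)"
        using c cINF_lower[OF bdd_SUP v] by linarith
      then show ?thesis
        using less_cSUP_iff[OF U bdd_column[OF v]] by blast
    qed
    then obtain \<alpha> where \<alpha>: "\<And>v. v \<in> V \<Longrightarrow> \<alpha> v \<in> U \<and> c < f (\<alpha> v) v"
      by metis
    have "c \<le> (INF v\<in>V. f (\<alpha> v) v)"
      using \<alpha> by (intro cINF_greatest[OF V]) (simp add: less_imp_le)
    also have "\<dots> \<le> (SUP \<alpha>\<in>{\<alpha>. \<alpha> ` V \<subseteq> U}. INF v\<in>V. f (\<alpha> v) v)"
      using \<alpha> by (intro cSUP_upper[OF _ bdd_INF]) auto
    finally show "c \<le> (SUP \<alpha>\<in>{\<alpha>. \<alpha> ` V \<subseteq> U}. INF v\<in>V. f (\<alpha> v) v)" .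
  qed
qed

lemma INF_maps_SUP_eq_SUP_INF:
  fixes f :: "'u \<Rightarrow> 'v \<Rightarrow> real"
  assumes U: "U \<noteq> {}" and V: "V \<noteq> {}"
    and bound: "\<And>u v. u \<in> U \<Longrightarrow> v \<in> V \<Longrightarrow> \<bar>f u v\<bar> \<le> B"
  shows "(INF \<beta>\<in>{\<beta>. \<beta> ` U \<subseteq> V}. SUP u\<in>U. f u (\<beta> u)) = (SUP u\<in>U. INF v\<in>V. f u v)"
proof (rule antisym)
  have bdd_row: "bdd_below ((\<lambda>v. f u v) ` V)" if "u \<in> U" for u
    using bound that by (intro bdd_image_if_abs_le) auto
  have bdd_INF: "bdd_above ((\<lambda>u. INF v\<in>V. f u v) ` U)"
    using V bound by (intro bdd_image_if_abs_le abs_cINF_le) auto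
  have bdd_SUP: "bdd_below ((\<lambda>\<beta>. SUP u\<in>U. f u (\<beta> u)) ` {\<beta>. \<beta> ` U \<subseteq> V})"
    using U bound by (intro bdd_image_if_abs_le abs_cSUP_le) auto
  show "(SUP u\<in>U. INF v\<in>V. f u v) \<le> (INF \<beta>\<in>{\<beta>. \<beta> ` U \<subseteq> V}. SUP u\<in>U. f u (\<beta> u))"
  proof (rule cINF_greatest[OF maps_into_nonempty[OF V]])
    fix \<beta> assume \<beta>: "\<beta> \<in> {\<beta>. \<beta> ` U \<subseteq> V}"
    have "(INF v\<in>V. f u v) \<le> f u (\<beta> u)" if "u \<in> U" for u
      using \<beta> that by (auto intro!: cINF_lower bdd_row)
    moreover have "bdd_above ((\<lambda>u. f u (\<beta> u)) ` U)"
      using \<beta> bound by (intro bdd_image_if_abs_le) auto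
    ultimately show "(SUP u\<in>U. INF v\<in>V. f u v) \<le> (SUP u\<in>U. f u (\<beta> u))"
      by (intro cSUP_mono[OF U]) auto
  qed
  show "(INF \<beta>\<in>{\<beta>. \<beta> ` U \<subseteq> V}. SUP u\<in>U. f u (\<beta> u)) \<le> (SUP u\<in>U. INF v\<in>V. f u v)"
  proof (rule dense_ge)
    fix c assume c: "(SUP u\<in>U. INF v\<in>V. f u v) < c"
    have "\<exists>v\<in>V. f u v < c" if u: "u \<in> U" for u
    proof -
      have "(INF v\<in>V. f u v) < c"
        using c cSUP_upper[OF u bdd_INF] by linarith
      then show ?thesis
        using cINF_less_iff[OF V bdd_row[OF u]] by blast
    qed
    then obtain \<beta> where \<beta>: "\<And>u. u \<in> U \<Longrightarrow> \<beta> u \<in> V \<and> f u (\<beta> u) < c"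
      by metis
    have "(INF \<beta>\<in>{\<beta>. \<beta> ` U \<subseteq> V}. SUP u\<in>U. f u (\<beta> u)) \<le> (SUP u\<in>U. f u (\<beta> u))"
      using \<beta> by (intro cINF_lower[OF bdd_SUP]) auto
    also have "\<dots> \<le> c"
      using \<beta> by (intro cSUP_least[OF U]) (simp add: less_imp_le)
    finally show "(INF \<beta>\<in>{\<beta>. \<beta> ` U \<subseteq> V}. SUP u\<in>U. f u (\<beta> u)) \<le> c" .
  qed
qed

lemma p_value_eq_SUP_INF:
  fixes f :: "'u \<Rightarrow> 'v \<Rightarrow> real"
  assumes U: "U \<noteq> {}" and V: "V \<noteq> {}"
    and bound: "\<And>u v. u \<in> U \<Longrightarrow> v \<in> V \<Longrightarrow> \<bar>f u v\<bar> \<le> B"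
    and "0 \<le> p" and "p \<le> 1"
  shows "p_value p U V f =
    (SUP ua\<in>U \<times> {\<alpha>. \<alpha> ` V \<subseteq> U}. INF vb\<in>V \<times> {\<beta>. \<beta> ` U \<subseteq> V}.
      p * f (fst ua) (snd vb (fst ua)) + (1 - p) * f (snd ua (fst vb)) (fst vb))"
proof -
  let ?A = "{\<alpha>. \<alpha> ` V \<subseteq> U}" and ?B = "{\<beta>. \<beta> ` U \<subseteq> V}"
  have inner: "(INF vb\<in>V \<times> ?B. p * f u (snd vb u) + (1 - p) * f (\<alpha> (fst vb)) (fst vb))
      = p * (INF v\<in>V. f u v) + (1 - p) * (INF v\<in>V. f (\<alpha> v) v)"
    if u: "u \<in> U" and \<alpha>: "\<alpha> ` V \<subseteq> U" for u \<alpha>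
  proof -
    have "bdd_below ((\<lambda>v. f (\<alpha> v) v) ` V)" 
      using u \<alpha> bound by (intro bdd_image_if_abs_le(2)[where B = B]) auto
    moreover have "bdd_below ((\<lambda>\<beta>. f u (\<beta> u)) ` ?B)"
      using u bound by (intro bdd_image_if_abs_le(2)[where B = B]) auto
    ultimately have "(INF vb\<in>V \<times> ?B. (1 - p) * f (\<alpha> (fst vb)) (fst vb) + p * f u (snd vb u))
        = (1 - p) * (INF v\<in>V. f (\<alpha> v) v) + p * (INF \<beta>\<in>?B. f u (\<beta> u))"
      using assms(4,5) by (intro cINF_Times_weighted[OF V maps_into_nonempty[OF V]]) auto
    moreover have "(INF \<beta>\<in>?B. f u (\<beta> u)) = (INF v\<in>V. f u v)"
      by (subst image_eval_maps_into[OF u, symmetric]) (simp add: image_image)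
    ultimately show ?thesis
      by (simp add: add.commute)
  qed
  have "(SUP ua\<in>U \<times> ?A. INF vb\<in>V \<times> ?B.
      p * f (fst ua) (snd vb (fst ua)) + (1 - p) * f (snd ua (fst vb)) (fst vb))
    = (SUP ua\<in>U \<times> ?A. p * (INF v\<in>V. f (fst ua) v) + (1 - p) * (INF v\<in>V. f (snd ua v) v))"
    using inner by (intro SUP_cong) auto
  also have "\<dots> = p * (SUP u\<in>U. INF v\<in>V. f u v) + (1 - p) * (SUP \<alpha>\<in>?A. INF v\<in>V. f (\<alpha> v) v)"
  proof (rule cSUP_Times_weighted[OF U maps_into_nonempty[OF U]])
    show "bdd_above ((\<lambda>u. INF v\<in>V. f u v) ` U)"
      using V bound by (intro bdd_image_if_abs_le(1)[where B = B] abs_cINF_le) auto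
    show "bdd_above ((\<lambda>\<alpha>. INF v\<in>V. f (\<alpha> v) v) ` ?A)"
      using V bound by (intro bdd_image_if_abs_le(1)[where B = B] abs_cINF_le) auto
  qed (use assms(4,5) in auto)
  also have "\<dots> = p_value p U V f"
    using SUP_maps_INF_eq_INF_SUP[where f = f, OF U V bound]
    unfolding p_value_def lower_value_def upper_value_def by simp
  finally show ?thesis by simp
qed

lemma p_value_eq_INF_SUP:
  fixes f :: "'u \<Rightarrow> 'v \<Rightarrow> real"
  assumes U: "U \<noteq> {}" and V: "V \<noteq> {}"
    and bound: "\<And>u v. u \<in> U \<Longrightarrow> v \<in> V \<Longrightarrow> \<bar>f u v\<bar> \<le> B"
    and "0 \<le> p" and "p \<le> 1"
  shows "p_value p U V f =
    (INF vb\<in>V \<times> {\<beta>. \<beta> ` U \<subseteq> V}. SUP ua\<in>U \<times> {\<alpha>. \<alpha> ` V \<subseteq> U}.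
      p * f (fst ua) (snd vb (fst ua)) + (1 - p) * f (snd ua (fst vb)) (fst vb))"
proof -
  let ?A = "{\<alpha>. \<alpha> ` V \<subseteq> U}" and ?B = "{\<beta>. \<beta> ` U \<subseteq> V}"
  have inner: "(SUP ua\<in>U \<times> ?A. p * f (fst ua) (\<beta> (fst ua)) + (1 - p) * f (snd ua v) v)
      = (1 - p) * (SUP u\<in>U. f u v) + p * (SUP u\<in>U. f u (\<beta> u))"
    if v: "v \<in> V" and \<beta>: "\<beta> ` U \<subseteq> V" for v \<beta>
  proof -
    have "bdd_above ((\<lambda>u. f u (\<beta> u)) ` U)"
      using \<beta> bound by (intro bdd_image_if_abs_le(1)[where B = B]) auto
    moreover have "bdd_above ((\<lambda>\<alpha>. f (\<alpha> v) v) ` ?A)"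
      using v bound by (intro bdd_image_if_abs_le(1)[where B = B]) auto
    ultimately have "(SUP ua\<in>U \<times> ?A. p * f (fst ua) (\<beta> (fst ua)) + (1 - p) * f (snd ua v) v)
        = p * (SUP u\<in>U. f u (\<beta> u)) + (1 - p) * (SUP \<alpha>\<in>?A. f (\<alpha> v) v)"
      using assms(4,5) by (intro cSUP_Times_weighted[OF U maps_into_nonempty[OF U]]) auto
    moreover have "(SUP \<alpha>\<in>?A. f (\<alpha> v) v) = (SUP u\<in>U. f u v)"
      by (subst image_eval_maps_into[OF v, symmetric]) (simp add: image_image)
    ultimately show ?thesis
      by (simp add: add.commute)
  qed
  have "(INF vb\<in>V \<times> ?B. SUP ua\<in>U \<times> ?A.
      p * f (fst ua) (snd vb (fst ua)) + (1 - p) * f (snd ua (fst vb)) (fst vb))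
    = (INF vb\<in>V \<times> ?B. (1 - p) * (SUP u\<in>U. f u (fst vb)) + p * (SUP u\<in>U. f u (snd vb u)))"
    using inner by (intro INF_cong) auto
  also have "\<dots> = (1 - p) * (INF v\<in>V. SUP u\<in>U. f u v)
      + p * (INF \<beta>\<in>?B. SUP u\<in>U. f u (\<beta> u))"
  proof (rule cINF_Times_weighted[OF V maps_into_nonempty[OF V]])
    show "bdd_below ((\<lambda>v. SUP u\<in>U. f u v) ` V)"
      using U bound by (intro bdd_image_if_abs_le(2)[where B = B] abs_cSUP_le) auto
    show "bdd_below ((\<lambda>\<beta>. SUP u\<in>U. f u (\<beta> u)) ` ?B)"
      using U bound by (intro bdd_image_if_abs_le(2)[where B = B] abs_cSUP_le) auto
  qed (use assms(4,5) in auto)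
  also have "\<dots> = p_value p U V f"
    using INF_maps_SUP_eq_SUP_INF[where f = f, OF U V bound]
    unfolding p_value_def lower_value_def upper_value_def by simp
  finally show ?thesis by simp
qed

theorem mainTheorem10:
  fixes U :: "'u set" and V :: "'v set" and f :: "'u \<Rightarrow> 'v \<Rightarrow> real" and p :: real
  assumes "U \<noteq> {}" and "V \<noteq> {}"
    and "\<exists>B. \<forall>u\<in>U. \<forall>v\<in>V. \<bar>f u v\<bar> \<le> B"
    and "0 \<le> p" and "p \<le> 1"
  shows "p_value p U V f =
           (SUP ua\<in>{(u, \<alpha>). u \<in> U \<and> \<alpha> ` V \<subseteq> U}.
              INF vb\<in>{(v, \<beta>). v \<in> V \<and> \<beta> ` U \<subseteq> V}.
                p * f (fst ua) (snd vb (fst ua)) + (1 - p) * f (snd ua (fst vb)) (fst vb))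
       \<and> p_value p U V f =
           (INF vb\<in>{(v, \<beta>). v \<in> V \<and> \<beta> ` U \<subseteq> V}.
              SUP ua\<in>{(u, \<alpha>). u \<in> U \<and> \<alpha> ` V \<subseteq> U}.
                p * f (fst ua) (snd vb (fst ua)) + (1 - p) * f (snd ua (fst vb)) (fst vb))"
proof -
  obtain B where bound: "\<And>u v. u \<in> U \<Longrightarrow> v \<in> V \<Longrightarrow> \<bar>f u v\<bar> \<le> B"
    using assms(3) by blast
  have strategies: "{(u, \<alpha>). u \<in> U \<and> \<alpha> ` V \<subseteq> U} = U \<times> {\<alpha>. \<alpha> ` V \<subseteq> U}"
    "{(v, \<beta>). v \<in> V \<and> \<beta> ` U \<subseteq> V} = V \<times> {\<beta>. \<beta> ` U \<subseteq> V}"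
    by auto
  show ?thesis
    unfolding strategies
    using p_value_eq_SUP_INF[where f = f, OF assms(1,2) bound assms(4,5)]
      p_value_eq_INF_SUP[where f = f, OF assms(1,2) bound assms(4,5)]
    by (rule conjI)
qed

end
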